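(* Let $V$ be a separable right quaternionic Hilbert space with the left scalar multiplication induced by a fixed Hilbert basis, and let $T\in\mathcal{B}(V)$. If $\Phi_{T,\pi}=\{q\in\mathbb{H}:R_q(T)\in\Phi_\pi\}$ is connected, then $\sigma_{S,\pi}^{\Phi}(T)=\sigma_{S,\pi}^{\Phi^{0}}(T)$.
   Context: $\mathbb{H}$ denotes the quaternions, $Re(q)$ the real part and $|q|$ the norm of $q$. $V$ is a separable right quaternionic Hilbert space; with a fixed Hilbert basis $\{f_k\}$ define the left multiplication $qf=\sum_kf_kq\langle f_k,f\rangle$. $\mathcal{B}(V)$, the bounded right linear operators with $(qT)f=q(Tf)$, $(Tq)f=T(qf)$, composition, adjoint and operator norm, is a quaternionic two-sided Banach $C^*$-algebra with unit $\mathbb{I}$. $\mathcal{K}(V)$ is the ideal of compact operators, $\pi:\mathcal{B}(V)\to\mathcal{B}(V)/\mathcal{K}(V)$ the quotient map. $R_q(T)=T^2-2Re(q)T+|q|^2\mathbb{I}$. $\Phi_\pi=\{A:\pi(A)\text{ invertible}\}$, $\Phi_\pi^0=\mathcal{B}(V)^{-1}+\mathcal{K}(V)$ (equivalently, Fredholm operators of index $0$, where $ind(A)=\dim A^{-1}(0)-\dim(A^* )^{-1}(0)$). $\sigma_{S,\pi}^{\Phi}(T)=\{q:R_q(T)\notin\Phi_\pi\}$, $\sigma_{S,\pi}^{\Phi^0}(T)=\{q:R_q(T)\notin\Phi^0_\pi\}$. *)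

theory Defs
  imports "HOL-Analysis.Analysis"
begin

text \<open>Quaternions via the Cayley--Dickson construction: the pair (a,b) stands for
  a + b j with a, b complex (so j z = cnj z j). The product norm of complex \<times> complex
  is exactly the quaternionic modulus and the product topology is the Euclidean one
  on R^4.\<close>
type_synonym quat = "complex \<times> complex"

definition qmult :: "quat \<Rightarrow> quat \<Rightarrow> quat" where
  "qmult p q = (fst p * fst q - snd p * cnj (snd q), fst p * snd q + snd p * cnj (fst q))"

definition qRe :: "quat \<Rightarrow> real" where
  "qRe q = Re (fst q)"

text \<open>The separable right quaternionic Hilbert space, realised (via a Hilbert basis
  indexed by I \<subseteq> nat) as square-summable quaternion sequences supported on I.\<close>
definition lsq :: "nat set \<Rightarrow> (nat \<Rightarrow> quat) set" where
  "lsq I = {x. (\<forall>n. n \<notin> I \<longrightarrow> x n = 0) \<and> summable (\<lambda>n. (norm (x n))\<^sup>2)}"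

definition vnorm :: "(nat \<Rightarrow> quat) \<Rightarrow> real" where
  "vnorm x = sqrt (\<Sum>n. (norm (x n))\<^sup>2)"

type_synonym qop = "(nat \<Rightarrow> quat) \<Rightarrow> (nat \<Rightarrow> quat)"

text \<open>Bounded right linear operators on lsq I (only their values on lsq I matter).\<close>
definition qbounded_op :: "nat set \<Rightarrow> qop \<Rightarrow> bool" where
  "qbounded_op I T \<longleftrightarrow>
     (\<forall>x\<in>lsq I. T x \<in> lsq I) \<and>
     (\<forall>x\<in>lsq I. \<forall>y\<in>lsq I. \<forall>q.
        T (\<lambda>n. qmult (x n) q + y n) = (\<lambda>n. qmult (T x n) q + T y n)) \<and>
     (\<exists>C. \<forall>x\<in>lsq I. vnorm (T x) \<le> C * vnorm x)"

text \<open>Compact operators: bounded operators mapping bounded sequences to sequences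
  with a Cauchy subsequence (equivalently, the image of the unit ball is relatively
  compact, the space being complete).\<close>
definition qcompact_op :: "nat set \<Rightarrow> qop \<Rightarrow> bool" where
  "qcompact_op I K \<longleftrightarrow> qbounded_op I K \<and>
     (\<forall>x :: nat \<Rightarrow> nat \<Rightarrow> quat. (\<forall>k. x k \<in> lsq I \<and> vnorm (x k) \<le> 1) \<longrightarrow>
        (\<exists>r :: nat \<Rightarrow> nat. strict_mono r \<and>
           (\<forall>e::real>0. \<exists>N::nat. \<forall>m\<ge>N. \<forall>n\<ge>N.
              vnorm (\<lambda>i. K (x (r m)) i - K (x (r n)) i) < e)))"

definition qinvertible_op :: "nat set \<Rightarrow> qop \<Rightarrow> bool" where
  "qinvertible_op I A \<longleftrightarrow> qbounded_op I A \<and>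
     (\<exists>B. qbounded_op I B \<and> (\<forall>x\<in>lsq I. A (B x) = x \<and> B (A x) = x))"

text \<open>\<Phi>_\<pi>: \<pi>(A) invertible in the Calkin algebra B(V)/K(V), i.e. there is a bounded B
  with AB - I and BA - I compact.\<close>
definition fredholm_pi :: "nat set \<Rightarrow> qop \<Rightarrow> bool" where
  "fredholm_pi I A \<longleftrightarrow> qbounded_op I A \<and>
     (\<exists>B. qbounded_op I B \<and>
        qcompact_op I (\<lambda>x n. A (B x) n - x n) \<and>
        qcompact_op I (\<lambda>x n. B (A x) n - x n))"

definition fredholm0_pi :: "nat set \<Rightarrow> qop \<Rightarrow> bool" where
  "fredholm0_pi I A \<longleftrightarrow>
     (\<exists>S K. qinvertible_op I S \<and> qcompact_op I K \<and> (\<forall>x\<in>lsq I. A x = (\<lambda>n. S x n + K x n)))"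

definition Rq :: "quat \<Rightarrow> qop \<Rightarrow> qop" where
  "Rq q T = (\<lambda>x n. T (T x) n - (2 * qRe q) *\<^sub>R T x n + ((norm q)\<^sup>2) *\<^sub>R x n)"

definition S_ess_spec :: "nat set \<Rightarrow> qop \<Rightarrow> quat set" where
  "S_ess_spec I T = {q. \<not> fredholm_pi I (Rq q T)}"

definition S_ess_spec0 :: "nat set \<Rightarrow> qop \<Rightarrow> quat set" where
  "S_ess_spec0 I T = {q. \<not> fredholm0_pi I (Rq q T)}"

end

theory Submission
  imports Defs
begin

text \<open>Two facts about the set \<Phi>^0 of operators of the form invertible plus compact drive the
  proof. It is open, because a small perturbation of an invertible operator is invertible
  (Neumann series). It is relatively closed in \<Phi>: if A \<in> \<Phi> has a parametrix B and some
  A' \<in> \<Phi>^0 is close enough to A, then A'B is a small perturbation of I plus a compact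
  operator, hence lies in \<Phi>^0; this forces first B and then A into \<Phi>^0. Since q \<mapsto> R_q(T)
  is norm continuous, the set of q with R_q(T) \<in> \<Phi>^0 is therefore open and closed in the
  connected set \<Phi>_{T,\<pi>}. It is nonempty because R_q(T) is invertible for every sufficiently
  large real q, so it is all of \<Phi>_{T,\<pi>}.\<close>

lemma qmult_one_right: "qmult a (1, 0) = a"
  by (simp add: qmult_def)

lemma qmult_of_real_right: "qmult a (complex_of_real r, 0) = r *\<^sub>R a"
  by (cases a) (simp add: qmult_def scaleR_conv_of_real mult.commute)

lemma qmult_scaleR_left: "qmult (r *\<^sub>R a) q = r *\<^sub>R qmult a q"
  by (simp add: qmult_def scaleR_conv_of_real algebra_simps)

lemma qmult_add_left: "qmult (a + b) q = qmult a q + qmult b q"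
  by (simp add: qmult_def algebra_simps)

lemma qmult_zero_left: "qmult 0 q = 0"
  by (simp add: qmult_def zero_prod_def)

lemma norm_qmult_le: "norm (qmult a q) \<le> 4 * norm a * norm q"
proof -
  have fst_snd: "norm (fst a) \<le> norm a" "norm (snd a) \<le> norm a"
    "norm (fst q) \<le> norm q" "norm (snd q) \<le> norm q"
    using norm_fst_le[of "fst a" "snd a"] norm_snd_le[of "snd a" "fst a"]
      norm_fst_le[of "fst q" "snd q"] norm_snd_le[of "snd q" "fst q"] by simp_all
  then have products: "norm (fst a) * norm (fst q) \<le> norm a * norm q"
    "norm (snd a) * norm (snd q) \<le> norm a * norm q"
    "norm (fst a) * norm (snd q) \<le> norm a * norm q"
    "norm (snd a) * norm (fst q) \<le> norm a * norm q"
    by (intro mult_mono; simp)+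
  have "norm (qmult a q) \<le> norm (fst (qmult a q)) + norm (snd (qmult a q))"
    by (metis norm_Pair_le prod.collapse)
  also have "\<dots> \<le> (norm (fst a) * norm (fst q) + norm (snd a) * norm (snd q))
      + (norm (fst a) * norm (snd q) + norm (snd a) * norm (fst q))"
    unfolding qmult_def fst_conv snd_conv
    by (intro add_mono order_trans[OF norm_triangle_ineq4] order_trans[OF norm_triangle_ineq])
      (simp_all add: norm_mult)
  finally show ?thesis
    using products by linarith
qed

section \<open>The sequence space\<close>

lemma lsq_eq_zero: "x \<in> lsq I \<Longrightarrow> n \<notin> I \<Longrightarrow> x n = 0"
  by (simp add: lsq_def)

lemma L2_set_le_vnorm:
  assumes "x \<in> lsq I"
  shows "L2_set (\<lambda>n. norm (x n)) {..<N} \<le> vnorm x"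
proof -
  have "(\<Sum>n<N. (norm (x n))\<^sup>2) \<le> (\<Sum>n. (norm (x n))\<^sup>2)"
    by (rule sum_le_suminf) (use assms in \<open>auto simp: lsq_def\<close>)
  then show ?thesis
    unfolding L2_set_def vnorm_def by simp
qed

lemma vnorm_nonneg: "x \<in> lsq I \<Longrightarrow> 0 \<le> vnorm x"
  using L2_set_le_vnorm[of x I 0] by simp

lemma norm_le_vnorm: "x \<in> lsq I \<Longrightarrow> norm (x n) \<le> vnorm x"
  using L2_set_le_vnorm[of x I "Suc n"] member_le_L2_set[of "{..<Suc n}" n "\<lambda>n. norm (x n)"]
  by simp

lemma vnorm_zero: "vnorm (\<lambda>n. 0) = 0"
  by (simp add: vnorm_def)

lemma vnorm_minus: "vnorm (\<lambda>n. - x n) = vnorm x"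
  by (simp add: vnorm_def)

lemma vnorm_le_zero_imp_zero: "x \<in> lsq I \<Longrightarrow> vnorm x \<le> 0 \<Longrightarrow> x = (\<lambda>n. 0)"
  using norm_le_vnorm[of x I] by (auto intro!: ext) (meson norm_le_zero_iff order_trans)

text \<open>The completeness of the space enters only through this criterion.\<close>
lemma lsq_if_L2_set_bounded:
  assumes supp: "\<And>n. n \<notin> I \<Longrightarrow> z n = 0" and "0 \<le> B"
    and bounded: "\<And>N. L2_set (\<lambda>n. norm (z n)) {..<N} \<le> B"
  shows "z \<in> lsq I \<and> vnorm z \<le> B"
proof -
  have partial: "(\<Sum>n<N. (norm (z n))\<^sup>2) \<le> B\<^sup>2" for N
  proof -
    have "sqrt (\<Sum>n<N. (norm (z n))\<^sup>2) \<le> sqrt (B\<^sup>2)"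
      using bounded[of N] \<open>0 \<le> B\<close> by (simp add: L2_set_def)
    then show ?thesis
      by (simp only: real_sqrt_le_iff)
  qed
  have summable: "summable (\<lambda>n. (norm (z n))\<^sup>2)"
    by (rule bounded_imp_summable[where B = "B\<^sup>2"])
      (use partial[of "Suc _"] in \<open>auto simp: lessThan_Suc_atMost\<close>)
  have "(\<Sum>n. (norm (z n))\<^sup>2) \<le> B\<^sup>2"
    by (rule suminf_le_const[OF summable partial])
  then have "vnorm z \<le> sqrt (B\<^sup>2)"
    unfolding vnorm_def by (rule real_sqrt_le_mono)
  with \<open>0 \<le> B\<close> summable supp show ?thesis
    by (simp add: lsq_def)
qed

lemma lsq_lincomb:
  assumes u: "u \<in> lsq I" and v: "v \<in> lsq I"
  shows "(\<lambda>n. a *\<^sub>R u n + b *\<^sub>R v n) \<in> lsq I \<and>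
    vnorm (\<lambda>n. a *\<^sub>R u n + b *\<^sub>R v n) \<le> \<bar>a\<bar> * vnorm u + \<bar>b\<bar> * vnorm v"
proof (rule lsq_if_L2_set_bounded)
  show "n \<notin> I \<Longrightarrow> a *\<^sub>R u n + b *\<^sub>R v n = 0" for n
    using u v by (simp add: lsq_eq_zero)
  show "0 \<le> \<bar>a\<bar> * vnorm u + \<bar>b\<bar> * vnorm v"
    using vnorm_nonneg[OF u] vnorm_nonneg[OF v] by simp
  fix N
  have "L2_set (\<lambda>n. norm (a *\<^sub>R u n + b *\<^sub>R v n)) {..<N}
      \<le> L2_set (\<lambda>n. \<bar>a\<bar> * norm (u n) + \<bar>b\<bar> * norm (v n)) {..<N}"
    by (rule L2_set_mono) (auto intro: order_trans[OF norm_triangle_ineq])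
  also have "\<dots> \<le> L2_set (\<lambda>n. \<bar>a\<bar> * norm (u n)) {..<N} + L2_set (\<lambda>n. \<bar>b\<bar> * norm (v n)) {..<N}"
    by (rule L2_set_triangle_ineq)
  also have "\<dots> = \<bar>a\<bar> * L2_set (\<lambda>n. norm (u n)) {..<N} + \<bar>b\<bar> * L2_set (\<lambda>n. norm (v n)) {..<N}"
    by (simp add: L2_set_right_distrib)
  also have "\<dots> \<le> \<bar>a\<bar> * vnorm u + \<bar>b\<bar> * vnorm v"
    by (intro add_mono mult_left_mono L2_set_le_vnorm[OF u] L2_set_le_vnorm[OF v]) auto
  finally show "L2_set (\<lambda>n. norm (a *\<^sub>R u n + b *\<^sub>R v n)) {..<N} \<le> \<bar>a\<bar> * vnorm u + \<bar>b\<bar> * vnorm v" .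
qed

lemma lsq_add: "u \<in> lsq I \<Longrightarrow> v \<in> lsq I \<Longrightarrow> (\<lambda>n. u n + v n) \<in> lsq I"
  using lsq_lincomb[of u I v 1 1] by simp

lemma vnorm_add_le: "u \<in> lsq I \<Longrightarrow> v \<in> lsq I \<Longrightarrow> vnorm (\<lambda>n. u n + v n) \<le> vnorm u + vnorm v"
  using lsq_lincomb[of u I v 1 1] by simp

lemma lsq_diff: "u \<in> lsq I \<Longrightarrow> v \<in> lsq I \<Longrightarrow> (\<lambda>n. u n - v n) \<in> lsq I"
  using lsq_lincomb[of u I v 1 "-1"] by simp

lemma vnorm_diff_le: "u \<in> lsq I \<Longrightarrow> v \<in> lsq I \<Longrightarrow> vnorm (\<lambda>n. u n - v n) \<le> vnorm u + vnorm v"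
  using lsq_lincomb[of u I v 1 "-1"] by simp

lemma lsq_scaleR: "u \<in> lsq I \<Longrightarrow> (\<lambda>n. a *\<^sub>R u n) \<in> lsq I"
  using lsq_lincomb[of u I u a 0] by simp

lemma vnorm_scaleR_le: "u \<in> lsq I \<Longrightarrow> vnorm (\<lambda>n. a *\<^sub>R u n) \<le> \<bar>a\<bar> * vnorm u"
  using lsq_lincomb[of u I u a 0] by simp

lemma lsq_zero: "(\<lambda>n. 0) \<in> lsq I"
  by (simp add: lsq_def)

lemma lsq_sum:
  fixes f :: "nat \<Rightarrow> nat \<Rightarrow> quat"
  assumes "\<And>k. f k \<in> lsq I"
  shows "(\<lambda>n. \<Sum>k<K. f k n) \<in> lsq I"
  by (induction K) (simp_all add: lsq_zero lsq_add assms)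

lemma lsq_dominated:
  assumes "x \<in> lsq I" and "\<And>n. norm (z n) \<le> K * norm (x n)" and "\<And>n. n \<notin> I \<Longrightarrow> z n = 0"
  shows "z \<in> lsq I"
proof -
  have "norm ((norm (z n))\<^sup>2) \<le> K\<^sup>2 * (norm (x n))\<^sup>2" for n
  proof -
    have "norm (z n) \<le> \<bar>K\<bar> * norm (x n)"
      using assms(2)[of n] mult_right_mono[OF abs_ge_self norm_ge_zero, of K "x n"] by linarith
    then have "(norm (z n))\<^sup>2 \<le> (\<bar>K\<bar> * norm (x n))\<^sup>2"
      by (simp add: power_mono)
    then show ?thesis
      by (simp add: power_mult_distrib)
  qed
  moreover have "summable (\<lambda>n. K\<^sup>2 * (norm (x n))\<^sup>2)"
    using assms(1) by (simp add: lsq_def)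
  ultimately have "summable (\<lambda>n. (norm (z n))\<^sup>2)"
    by (rule summable_comparison_test'[where N = 0, rotated])
  with assms(3) show ?thesis
    by (simp add: lsq_def)
qed

lemma lsq_qmult_add:
  assumes x: "x \<in> lsq I" and y: "y \<in> lsq I"
  shows "(\<lambda>n. qmult (x n) q + y n) \<in> lsq I"
proof (rule lsq_add[OF lsq_dominated[OF x] y])
  show "norm (qmult (x n) q) \<le> 4 * norm q * norm (x n)" for n
    using norm_qmult_le[of "x n" q] by (simp add: mult_ac)
  show "n \<notin> I \<Longrightarrow> qmult (x n) q = 0" for n
    by (simp add: lsq_eq_zero[OF x] qmult_zero_left)
qed

lemma lsq_suminf:
  fixes y :: "nat \<Rightarrow> nat \<Rightarrow> quat"
  assumes y: "\<And>k. y k \<in> lsq I" and summable: "summable (\<lambda>k. vnorm (y k))"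
  shows "(\<lambda>n. \<Sum>k. y k n) \<in> lsq I \<and> vnorm (\<lambda>n. \<Sum>k. y k n) \<le> (\<Sum>k. vnorm (y k))"
proof -
  have "summable (\<lambda>k. norm (y k n))" for n
    by (rule summable_comparison_test'[OF summable, where N = 0]) (simp add: norm_le_vnorm[OF y])
  then have summable_at: "summable (\<lambda>k. y k n)" for n
    by (rule summable_norm_cancel)
  show ?thesis
  proof (rule lsq_if_L2_set_bounded)
    show "n \<notin> I \<Longrightarrow> (\<Sum>k. y k n) = 0" for n
      using lsq_eq_zero[OF y] by simp
    show "0 \<le> (\<Sum>k. vnorm (y k))"
      by (rule suminf_nonneg[OF summable]) (simp add: vnorm_nonneg[OF y])
    fix N
    have partial: "L2_set (\<lambda>n. norm (\<Sum>k<L. y k n)) {..<N} \<le> (\<Sum>k<L. vnorm (y k))" for L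
    proof (induction L)
      case 0
      then show ?case by (simp add: L2_set_def)
    next
      case (Suc L)
      have "L2_set (\<lambda>n. norm (\<Sum>k<Suc L. y k n)) {..<N}
          \<le> L2_set (\<lambda>n. norm (\<Sum>k<L. y k n) + norm (y L n)) {..<N}"
        by (rule L2_set_mono) (simp_all add: norm_triangle_ineq)
      also have "\<dots> \<le> L2_set (\<lambda>n. norm (\<Sum>k<L. y k n)) {..<N} + L2_set (\<lambda>n. norm (y L n)) {..<N}"
        by (rule L2_set_triangle_ineq)
      also have "\<dots> \<le> (\<Sum>k<L. vnorm (y k)) + vnorm (y L)"
        by (rule add_mono[OF Suc.IH L2_set_le_vnorm[OF y]])
      finally show ?case by simp
    qed
    have le_suminf: "(\<Sum>k<L. vnorm (y k)) \<le> (\<Sum>k. vnorm (y k))" for L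
      by (rule sum_le_suminf[OF summable]) (auto simp: vnorm_nonneg[OF y])
    have "(\<lambda>L. L2_set (\<lambda>n. norm (\<Sum>k<L. y k n)) {..<N})
        \<longlonglongrightarrow> L2_set (\<lambda>n. norm (\<Sum>k. y k n)) {..<N}"
      unfolding L2_set_def by (intro tendsto_intros summable_LIMSEQ summable_at)
    then show "L2_set (\<lambda>n. norm (\<Sum>k. y k n)) {..<N} \<le> (\<Sum>k. vnorm (y k))"
      by (rule LIMSEQ_le_const2) (blast intro: order_trans[OF partial le_suminf])
  qed
qed

lemma vnorm_suminf_remainder_le:
  fixes y :: "nat \<Rightarrow> nat \<Rightarrow> quat"
  assumes y: "\<And>k. y k \<in> lsq I" and summable: "summable (\<lambda>k. vnorm (y k))"
  shows "vnorm (\<lambda>n. (\<Sum>k. y k n) - (\<Sum>k<K. y k n)) \<le> (\<Sum>j. vnorm (y (j + K)))"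
proof -
  have summable_at: "summable (\<lambda>k. y k n)" for n
    by (rule summable_norm_cancel, rule summable_comparison_test'[OF summable, where N = 0])
      (simp add: norm_le_vnorm[OF y])
  have "(\<lambda>n. (\<Sum>k. y k n) - (\<Sum>k<K. y k n)) = (\<lambda>n. \<Sum>j. y (j + K) n)"
    using suminf_split_initial_segment[OF summable_at, of _ K] by (simp add: algebra_simps)
  moreover have "summable (\<lambda>j. vnorm (y (j + K)))"
    using summable summable_iff_shift[of "\<lambda>k. vnorm (y k)" K] by simp
  ultimately show ?thesis
    using lsq_suminf[of "\<lambda>j. y (j + K)" I] y by simp
qed

lemma suminf_shift_tendsto_zero:
  assumes "summable (f :: nat \<Rightarrow> real)"
  shows "(\<lambda>K. \<Sum>j. f (j + K)) \<longlonglongrightarrow> 0"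
proof -
  have "(\<lambda>K. suminf f - sum f {..<K}) \<longlonglongrightarrow> suminf f - suminf f"
    by (intro tendsto_intros summable_LIMSEQ assms)
  then show ?thesis
    by (simp add: suminf_minus_initial_segment[OF assms])
qed

section \<open>Bounded operators\<close>

definition opnorm_le :: "nat set \<Rightarrow> qop \<Rightarrow> real \<Rightarrow> bool" where
  "opnorm_le I E c \<longleftrightarrow> (\<forall>x\<in>lsq I. vnorm (E x) \<le> c * vnorm x)"

lemma opnorm_leD: "opnorm_le I E c \<Longrightarrow> x \<in> lsq I \<Longrightarrow> vnorm (E x) \<le> c * vnorm x"
  by (simp add: opnorm_le_def)

lemma opnorm_le_mono: "opnorm_le I E c \<Longrightarrow> c \<le> c' \<Longrightarrow> opnorm_le I E c'"
  unfolding opnorm_le_def by (meson mult_right_mono order_trans vnorm_nonneg)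

lemma opnorm_le_comp:
  assumes A: "opnorm_le I A a" and "0 \<le> a" and B: "opnorm_le I B b"
    and B_lsq: "\<And>x. x \<in> lsq I \<Longrightarrow> B x \<in> lsq I"
  shows "opnorm_le I (\<lambda>x. A (B x)) (a * b)"
  unfolding opnorm_le_def
proof
  fix x
  assume x: "x \<in> lsq I"
  have "vnorm (A (B x)) \<le> a * vnorm (B x)"
    by (rule opnorm_leD[OF A B_lsq[OF x]])
  also have "\<dots> \<le> a * (b * vnorm x)"
    using opnorm_leD[OF B x] \<open>0 \<le> a\<close> by (rule mult_left_mono)
  finally show "vnorm (A (B x)) \<le> a * b * vnorm x"
    by (simp add: mult_ac)
qed

lemma qbounded_opI:
  assumes "\<And>x. x \<in> lsq I \<Longrightarrow> T x \<in> lsq I"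
    and "\<And>x y q. x \<in> lsq I \<Longrightarrow> y \<in> lsq I \<Longrightarrow>
      T (\<lambda>n. qmult (x n) q + y n) = (\<lambda>n. qmult (T x n) q + T y n)"
    and "opnorm_le I T C"
  shows "qbounded_op I T"
  using assms unfolding qbounded_op_def opnorm_le_def by blast

lemma qbounded_op_lsq: "qbounded_op I T \<Longrightarrow> x \<in> lsq I \<Longrightarrow> T x \<in> lsq I"
  by (simp add: qbounded_op_def)

lemma qbounded_op_linear:
  "qbounded_op I T \<Longrightarrow> x \<in> lsq I \<Longrightarrow> y \<in> lsq I \<Longrightarrow>
    T (\<lambda>n. qmult (x n) q + y n) = (\<lambda>n. qmult (T x n) q + T y n)"
  by (cases q) (simp add: qbounded_op_def)

lemma qbounded_op_opnorm_le:
  assumes "qbounded_op I T"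
  obtains C where "opnorm_le I T C" and "0 < C"
proof -
  obtain C where "opnorm_le I T C"
    using assms by (auto simp: qbounded_op_def opnorm_le_def)
  then have "opnorm_le I T (\<bar>C\<bar> + 1)"
    by (rule opnorm_le_mono) simp
  then show thesis
    by (rule that) simp
qed

lemma qbounded_op_apply_add:
  "qbounded_op I T \<Longrightarrow> x \<in> lsq I \<Longrightarrow> y \<in> lsq I \<Longrightarrow> T (\<lambda>n. x n + y n) = (\<lambda>n. T x n + T y n)"
  using qbounded_op_linear[of I T x y "(1, 0)"] by (simp add: qmult_one_right)

lemma qbounded_op_apply_zero:
  assumes "qbounded_op I T"
  shows "T (\<lambda>n. 0) = (\<lambda>n. 0)"
  using qbounded_op_apply_add[OF assms lsq_zero lsq_zero] by (simp add: fun_eq_iff)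

lemma qbounded_op_apply_scaleR:
  assumes "qbounded_op I T" and "x \<in> lsq I"
  shows "T (\<lambda>n. r *\<^sub>R x n) = (\<lambda>n. r *\<^sub>R T x n)"
  using qbounded_op_linear[OF assms lsq_zero, of "(complex_of_real r, 0)"]
    qbounded_op_apply_zero[OF assms(1)]
  by (simp add: qmult_of_real_right)

lemma qbounded_op_apply_diff:
  assumes "qbounded_op I T" and "x \<in> lsq I" and "y \<in> lsq I"
  shows "T (\<lambda>n. x n - y n) = (\<lambda>n. T x n - T y n)"
  using qbounded_op_apply_add[OF assms(1,2) lsq_scaleR[OF assms(3)], of "-1"]
    qbounded_op_apply_scaleR[OF assms(1,3), of "-1"]
  by simp

lemma qbounded_op_lipschitz:
  assumes "qbounded_op I T" and "opnorm_le I T C" and "x \<in> lsq I" and "y \<in> lsq I"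
  shows "vnorm (\<lambda>n. T x n - T y n) \<le> C * vnorm (\<lambda>n. x n - y n)"
  using opnorm_leD[OF assms(2) lsq_diff[OF assms(3,4)]] qbounded_op_apply_diff[OF assms(1,3,4)]
  by simp

lemma qbounded_op_cong:
  assumes T: "qbounded_op I T" and eq: "\<And>x. x \<in> lsq I \<Longrightarrow> T' x = T x"
  shows "qbounded_op I T'"
proof -
  obtain C where C: "opnorm_le I T C"
    using qbounded_op_opnorm_le[OF T] .
  show ?thesis
  proof (rule qbounded_opI)
    show "x \<in> lsq I \<Longrightarrow> T' x \<in> lsq I" for x
      using eq qbounded_op_lsq[OF T] by simp
    show "x \<in> lsq I \<Longrightarrow> y \<in> lsq I \<Longrightarrow>
        T' (\<lambda>n. qmult (x n) q + y n) = (\<lambda>n. qmult (T' x n) q + T' y n)" for x y q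
      using eq qbounded_op_linear[OF T] lsq_qmult_add by simp
    show "opnorm_le I T' C"
      using C eq by (simp add: opnorm_le_def)
  qed
qed

lemma qbounded_op_lincomb:
  assumes A: "qbounded_op I A" and B: "qbounded_op I B"
  shows "qbounded_op I (\<lambda>x n. a *\<^sub>R A x n + b *\<^sub>R B x n)"
proof -
  obtain CA where CA: "opnorm_le I A CA"
    using qbounded_op_opnorm_le[OF A] .
  obtain CB where CB: "opnorm_le I B CB"
    using qbounded_op_opnorm_le[OF B] .
  show ?thesis
  proof (rule qbounded_opI)
    show "x \<in> lsq I \<Longrightarrow> (\<lambda>n. a *\<^sub>R A x n + b *\<^sub>R B x n) \<in> lsq I" for x
      using lsq_lincomb[OF qbounded_op_lsq[OF A] qbounded_op_lsq[OF B]] by blast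
    show "x \<in> lsq I \<Longrightarrow> y \<in> lsq I \<Longrightarrow>
        (\<lambda>n. a *\<^sub>R A (\<lambda>n. qmult (x n) q + y n) n + b *\<^sub>R B (\<lambda>n. qmult (x n) q + y n) n)
        = (\<lambda>n. qmult (a *\<^sub>R A x n + b *\<^sub>R B x n) q + (a *\<^sub>R A y n + b *\<^sub>R B y n))" for x y q
      using qbounded_op_linear[OF A] qbounded_op_linear[OF B]
      by (simp add: qmult_add_left qmult_scaleR_left algebra_simps)
    show "opnorm_le I (\<lambda>x n. a *\<^sub>R A x n + b *\<^sub>R B x n) (\<bar>a\<bar> * CA + \<bar>b\<bar> * CB)"
      unfolding opnorm_le_def
    proof
      fix x
      assume x: "x \<in> lsq I"
      have "vnorm (\<lambda>n. a *\<^sub>R A x n + b *\<^sub>R B x n) \<le> \<bar>a\<bar> * vnorm (A x) + \<bar>b\<bar> * vnorm (B x)"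
        using lsq_lincomb[OF qbounded_op_lsq[OF A x] qbounded_op_lsq[OF B x]] by blast
      also have "\<dots> \<le> \<bar>a\<bar> * (CA * vnorm x) + \<bar>b\<bar> * (CB * vnorm x)"
        by (intro add_mono mult_left_mono opnorm_leD[OF CA x] opnorm_leD[OF CB x]) auto
      finally show "vnorm (\<lambda>n. a *\<^sub>R A x n + b *\<^sub>R B x n) \<le> (\<bar>a\<bar> * CA + \<bar>b\<bar> * CB) * vnorm x"
        by (simp add: algebra_simps)
    qed
  qed
qed

lemma qbounded_op_id: "qbounded_op I (\<lambda>x. x)"
  by (rule qbounded_opI[where C = 1]) (auto simp: opnorm_le_def)

lemma qbounded_op_comp:
  assumes A: "qbounded_op I A" and B: "qbounded_op I B"
  shows "qbounded_op I (\<lambda>x. A (B x))"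
proof -
  obtain CA where CA: "opnorm_le I A CA" "0 < CA"
    using qbounded_op_opnorm_le[OF A] .
  obtain CB where CB: "opnorm_le I B CB"
    using qbounded_op_opnorm_le[OF B] .
  show ?thesis
  proof (rule qbounded_opI)
    show "x \<in> lsq I \<Longrightarrow> A (B x) \<in> lsq I" for x
      using A B qbounded_op_lsq by blast
    show "x \<in> lsq I \<Longrightarrow> y \<in> lsq I \<Longrightarrow>
        A (B (\<lambda>n. qmult (x n) q + y n)) = (\<lambda>n. qmult (A (B x) n) q + A (B y) n)" for x y q
      using qbounded_op_linear[OF A] qbounded_op_linear[OF B] qbounded_op_lsq[OF B] by simp
    show "opnorm_le I (\<lambda>x. A (B x)) (CA * CB)"
      using CA CB qbounded_op_lsq[OF B] by (intro opnorm_le_comp) simp_all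
  qed
qed

lemma qbounded_op_add: "qbounded_op I A \<Longrightarrow> qbounded_op I B \<Longrightarrow> qbounded_op I (\<lambda>x n. A x n + B x n)"
  using qbounded_op_lincomb[of I A B 1 1] by simp

lemma qbounded_op_diff: "qbounded_op I A \<Longrightarrow> qbounded_op I B \<Longrightarrow> qbounded_op I (\<lambda>x n. A x n - B x n)"
  using qbounded_op_lincomb[of I A B 1 "-1"] by simp

lemma qbounded_op_scaleR: "qbounded_op I A \<Longrightarrow> qbounded_op I (\<lambda>x n. a *\<^sub>R A x n)"
  using qbounded_op_lincomb[of I A A a 0] by simp

lemma qbounded_op_zero: "qbounded_op I (\<lambda>x n. 0)"
  using qbounded_op_scaleR[OF qbounded_op_id, of I 0] by simp

section \<open>Compact operators\<close>

definition vnorm_Cauchy :: "(nat \<Rightarrow> nat \<Rightarrow> quat) \<Rightarrow> bool" where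
  "vnorm_Cauchy f \<longleftrightarrow> (\<forall>e::real>0. \<exists>N. \<forall>m\<ge>N. \<forall>n\<ge>N. vnorm (\<lambda>i. f m i - f n i) < e)"

lemma vnorm_Cauchy_subseq:
  assumes "vnorm_Cauchy f" and "strict_mono r"
  shows "vnorm_Cauchy (\<lambda>m. f (r m))"
  unfolding vnorm_Cauchy_def
proof (intro allI impI)
  fix e :: real
  assume "0 < e"
  then obtain N where "\<forall>m\<ge>N. \<forall>n\<ge>N. vnorm (\<lambda>i. f m i - f n i) < e"
    using assms(1) vnorm_Cauchy_def by blast
  then show "\<exists>N. \<forall>m\<ge>N. \<forall>n\<ge>N. vnorm (\<lambda>i. f (r m) i - f (r n) i) < e"
    using seq_suble[OF assms(2)] le_trans by blast
qed

lemma vnorm_Cauchy_lincomb: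
  assumes f: "\<And>m. f m \<in> lsq I" and g: "\<And>m. g m \<in> lsq I"
    and "vnorm_Cauchy f" and "vnorm_Cauchy g"
  shows "vnorm_Cauchy (\<lambda>m i. a *\<^sub>R f m i + b *\<^sub>R g m i)"
  unfolding vnorm_Cauchy_def
proof (intro allI impI)
  fix e :: real
  assume "0 < e"
  define d where "d = e / (\<bar>a\<bar> + \<bar>b\<bar> + 1)"
  have "0 < d" and d: "\<bar>a\<bar> * d + \<bar>b\<bar> * d < e"
    using \<open>0 < e\<close> by (simp_all add: d_def field_simps add_pos_nonneg)
  obtain N1 where N1: "\<forall>m\<ge>N1. \<forall>n\<ge>N1. vnorm (\<lambda>i. f m i - f n i) < d"
    using assms(3) \<open>0 < d\<close> unfolding vnorm_Cauchy_def by blast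
  obtain N2 where N2: "\<forall>m\<ge>N2. \<forall>n\<ge>N2. vnorm (\<lambda>i. g m i - g n i) < d"
    using assms(4) \<open>0 < d\<close> unfolding vnorm_Cauchy_def by blast
  have "vnorm (\<lambda>i. (a *\<^sub>R f m i + b *\<^sub>R g m i) - (a *\<^sub>R f n i + b *\<^sub>R g n i)) < e"
    if "max N1 N2 \<le> m" "max N1 N2 \<le> n" for m n
  proof -
    let ?u = "\<lambda>i. f m i - f n i" and ?v = "\<lambda>i. g m i - g n i"
    have "(\<lambda>i. (a *\<^sub>R f m i + b *\<^sub>R g m i) - (a *\<^sub>R f n i + b *\<^sub>R g n i))
        = (\<lambda>i. a *\<^sub>R ?u i + b *\<^sub>R ?v i)"
      by (simp add: algebra_simps)
    moreover have "vnorm (\<lambda>i. a *\<^sub>R ?u i + b *\<^sub>R ?v i) \<le> \<bar>a\<bar> * vnorm ?u + \<bar>b\<bar> * vnorm ?v"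
      using lsq_lincomb[OF lsq_diff[OF f f] lsq_diff[OF g g]] by blast
    moreover have "\<bar>a\<bar> * vnorm ?u + \<bar>b\<bar> * vnorm ?v \<le> \<bar>a\<bar> * d + \<bar>b\<bar> * d"
      using N1 N2 that by (intro add_mono mult_left_mono) (auto intro: less_imp_le)
    ultimately show ?thesis
      using d by simp
  qed
  then show "\<exists>N. \<forall>m\<ge>N. \<forall>n\<ge>N.
      vnorm (\<lambda>i. (a *\<^sub>R f m i + b *\<^sub>R g m i) - (a *\<^sub>R f n i + b *\<^sub>R g n i)) < e"
    by blast
qed

lemma vnorm_Cauchy_scaleR:
  "(\<And>m. f m \<in> lsq I) \<Longrightarrow> vnorm_Cauchy f \<Longrightarrow> vnorm_Cauchy (\<lambda>m i. a *\<^sub>R f m i)"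
  using vnorm_Cauchy_lincomb[of f I f a 0] by simp

lemma vnorm_Cauchy_apply:
  assumes B: "qbounded_op I B" and f: "\<And>m. f m \<in> lsq I" and "vnorm_Cauchy f"
  shows "vnorm_Cauchy (\<lambda>m. B (f m))"
  unfolding vnorm_Cauchy_def
proof (intro allI impI)
  fix e :: real
  assume "0 < e"
  obtain C where C: "opnorm_le I B C" "0 < C"
    using qbounded_op_opnorm_le[OF B] .
  obtain N where N: "\<forall>m\<ge>N. \<forall>n\<ge>N. vnorm (\<lambda>i. f m i - f n i) < e / C"
    using assms(3) divide_pos_pos[OF \<open>0 < e\<close> \<open>0 < C\<close>] unfolding vnorm_Cauchy_def by blast
  have "vnorm (\<lambda>i. B (f m) i - B (f n) i) < e" if "N \<le> m" "N \<le> n" for m n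
  proof -
    have "vnorm (\<lambda>i. B (f m) i - B (f n) i) \<le> C * vnorm (\<lambda>i. f m i - f n i)"
      by (rule qbounded_op_lipschitz[OF B C(1) f f])
    also have "\<dots> < C * (e / C)"
      using N that C(2) by (intro mult_strict_left_mono) auto
    finally show ?thesis
      using C(2) by simp
  qed
  then show "\<exists>N. \<forall>m\<ge>N. \<forall>n\<ge>N. vnorm (\<lambda>i. B (f m) i - B (f n) i) < e"
    by blast
qed

lemma qcompact_op_iff:
  "qcompact_op I K \<longleftrightarrow> qbounded_op I K \<and>
    (\<forall>x::nat \<Rightarrow> nat \<Rightarrow> quat. (\<forall>k. x k \<in> lsq I \<and> vnorm (x k) \<le> 1) \<longrightarrow>
      (\<exists>r. strict_mono r \<and> vnorm_Cauchy (\<lambda>m. K (x (r m)))))"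
  unfolding qcompact_op_def vnorm_Cauchy_def by simp

lemma qcompact_opI:
  "qbounded_op I K \<Longrightarrow>
    (\<And>x::nat \<Rightarrow> nat \<Rightarrow> quat. (\<And>k. x k \<in> lsq I) \<Longrightarrow> (\<And>k. vnorm (x k) \<le> 1) \<Longrightarrow>
      \<exists>r. strict_mono r \<and> vnorm_Cauchy (\<lambda>m. K (x (r m))))
  \<Longrightarrow> qcompact_op I K"
  unfolding qcompact_op_iff by simp

lemma qcompact_opE:
  assumes "qcompact_op I K" and "\<And>k. (x::nat \<Rightarrow> nat \<Rightarrow> quat) k \<in> lsq I" and "\<And>k. vnorm (x k) \<le> 1"
  obtains r where "strict_mono r" and "vnorm_Cauchy (\<lambda>m. K (x (r m)))"
  using assms unfolding qcompact_op_iff by meson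

lemma qcompact_op_bounded: "qcompact_op I K \<Longrightarrow> qbounded_op I K"
  by (simp add: qcompact_op_def)

lemma qcompact_op_cong:
  assumes K: "qcompact_op I K" and eq: "\<And>x. x \<in> lsq I \<Longrightarrow> K' x = K x"
  shows "qcompact_op I K'"
proof (rule qcompact_opI)
  show "qbounded_op I K'"
    by (rule qbounded_op_cong[OF qcompact_op_bounded[OF K] eq])
  fix x :: "nat \<Rightarrow> nat \<Rightarrow> quat"
  assume x: "\<And>k. x k \<in> lsq I" "\<And>k. vnorm (x k) \<le> 1"
  obtain r where "strict_mono r" "vnorm_Cauchy (\<lambda>m. K (x (r m)))"
    using qcompact_opE[OF K x] .
  with eq x show "\<exists>r. strict_mono r \<and> vnorm_Cauchy (\<lambda>m. K' (x (r m)))"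
    by auto
qed

lemma qcompact_op_zero: "qcompact_op I (\<lambda>x n. 0)"
  by (rule qcompact_opI[OF qbounded_op_zero], rule exI[of _ "\<lambda>m. m"])
    (simp add: strict_mono_def vnorm_Cauchy_def vnorm_zero)

lemma qcompact_op_lincomb:
  assumes K1: "qcompact_op I K1" and K2: "qcompact_op I K2"
  shows "qcompact_op I (\<lambda>x n. a *\<^sub>R K1 x n + b *\<^sub>R K2 x n)"
proof (rule qcompact_opI)
  show "qbounded_op I (\<lambda>x n. a *\<^sub>R K1 x n + b *\<^sub>R K2 x n)"
    by (rule qbounded_op_lincomb[OF qcompact_op_bounded[OF K1] qcompact_op_bounded[OF K2]])
  fix x :: "nat \<Rightarrow> nat \<Rightarrow> quat"
  assume x: "\<And>k. x k \<in> lsq I" "\<And>k. vnorm (x k) \<le> 1"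
  obtain r1 where r1: "strict_mono r1" "vnorm_Cauchy (\<lambda>m. K1 (x (r1 m)))"
    using qcompact_opE[OF K1 x] .
  have "\<And>k. x (r1 k) \<in> lsq I" "\<And>k. vnorm (x (r1 k)) \<le> 1"
    using x by auto
  then obtain r2 where r2: "strict_mono r2" "vnorm_Cauchy (\<lambda>m. K2 (x (r1 (r2 m))))"
    by (rule qcompact_opE[OF K2])
  have K1_lsq: "K1 (x k) \<in> lsq I" and K2_lsq: "K2 (x k) \<in> lsq I" for k
    using qbounded_op_lsq[OF qcompact_op_bounded[OF K1] x(1)]
      qbounded_op_lsq[OF qcompact_op_bounded[OF K2] x(1)] by blast+
  have "vnorm_Cauchy (\<lambda>m i. a *\<^sub>R K1 (x (r1 (r2 m))) i + b *\<^sub>R K2 (x (r1 (r2 m))) i)"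
    by (rule vnorm_Cauchy_lincomb[OF K1_lsq K2_lsq vnorm_Cauchy_subseq[OF r1(2) r2(1)] r2(2)])
  moreover have "strict_mono (r1 \<circ> r2)"
    using r1(1) r2(1) by (rule strict_mono_o)
  ultimately show "\<exists>r. strict_mono r \<and> vnorm_Cauchy (\<lambda>m. (\<lambda>x n. a *\<^sub>R K1 x n + b *\<^sub>R K2 x n) (x (r m)))"
    by (intro exI[of _ "r1 \<circ> r2"]) simp
qed

lemma qcompact_op_diff:
  "qcompact_op I A \<Longrightarrow> qcompact_op I B \<Longrightarrow> qcompact_op I (\<lambda>x n. A x n - B x n)"
  using qcompact_op_lincomb[of I A B 1 "-1"] by simp

lemma qcompact_op_comp_left:
  assumes B: "qbounded_op I B" and K: "qcompact_op I K"
  shows "qcompact_op I (\<lambda>x. B (K x))"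
proof (rule qcompact_opI)
  show "qbounded_op I (\<lambda>x. B (K x))"
    by (rule qbounded_op_comp[OF B qcompact_op_bounded[OF K]])
  fix x :: "nat \<Rightarrow> nat \<Rightarrow> quat"
  assume x: "\<And>k. x k \<in> lsq I" "\<And>k. vnorm (x k) \<le> 1"
  obtain r where r: "strict_mono r" "vnorm_Cauchy (\<lambda>m. K (x (r m)))"
    using qcompact_opE[OF K x] .
  have "vnorm_Cauchy (\<lambda>m. B (K (x (r m))))"
    by (rule vnorm_Cauchy_apply[OF B qbounded_op_lsq[OF qcompact_op_bounded[OF K] x(1)] r(2)])
  with r(1) show "\<exists>r. strict_mono r \<and> vnorm_Cauchy (\<lambda>m. B (K (x (r m))))"
    by blast
qed

lemma qcompact_op_comp_right:
  assumes K: "qcompact_op I K" and B: "qbounded_op I B"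
  shows "qcompact_op I (\<lambda>x. K (B x))"
proof (rule qcompact_opI)
  have K_bounded: "qbounded_op I K"
    by (rule qcompact_op_bounded[OF K])
  show "qbounded_op I (\<lambda>x. K (B x))"
    by (rule qbounded_op_comp[OF K_bounded B])
  obtain C where C: "opnorm_le I B C" "0 < C"
    using qbounded_op_opnorm_le[OF B] .
  fix x :: "nat \<Rightarrow> nat \<Rightarrow> quat"
  assume x: "\<And>k. x k \<in> lsq I" "\<And>k. vnorm (x k) \<le> 1"
  \<comment> \<open>rescale the images B x k back into the unit ball\<close>
  define y where "y k = (\<lambda>n. (1 / C) *\<^sub>R B (x k) n)" for k
  have y: "y k \<in> lsq I" for k
    unfolding y_def by (rule lsq_scaleR[OF qbounded_op_lsq[OF B x(1)]])
  have "vnorm (y k) \<le> 1" for k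
  proof -
    have "vnorm (y k) \<le> (1 / C) * vnorm (B (x k))"
      using vnorm_scaleR_le[OF qbounded_op_lsq[OF B x(1)], of "1 / C" k] C(2) by (simp add: y_def)
    also have "\<dots> \<le> (1 / C) * (C * vnorm (x k))"
      using C opnorm_leD[OF C(1) x(1)[of k]] by (intro mult_left_mono) auto
    also have "\<dots> \<le> 1"
      using C(2) x(2)[of k] by simp
    finally show ?thesis .
  qed
  with K y obtain r where r: "strict_mono r" "vnorm_Cauchy (\<lambda>m. K (y (r m)))"
    by (rule qcompact_opE)
  have rescale: "K (B (x k)) = (\<lambda>n. C *\<^sub>R K (y k) n)" for k
  proof -
    have "B (x k) = (\<lambda>n. C *\<^sub>R y k n)"
      using C(2) by (simp add: y_def)
    then show ?thesis
      using qbounded_op_apply_scaleR[OF K_bounded y] by simp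
  qed
  have "vnorm_Cauchy (\<lambda>m i. C *\<^sub>R K (y (r m)) i)"
    by (rule vnorm_Cauchy_scaleR[OF qbounded_op_lsq[OF K_bounded y] r(2)])
  then show "\<exists>r. strict_mono r \<and> vnorm_Cauchy (\<lambda>m. K (B (x (r m))))"
    using r(1) by (simp only: rescale) blast
qed

section \<open>Invertible operators\<close>

lemma qinvertible_opI:
  "qbounded_op I S \<Longrightarrow> qbounded_op I S' \<Longrightarrow> (\<And>x. x \<in> lsq I \<Longrightarrow> S (S' x) = x) \<Longrightarrow>
    (\<And>x. x \<in> lsq I \<Longrightarrow> S' (S x) = x) \<Longrightarrow> qinvertible_op I S"
  unfolding qinvertible_op_def by blast

lemma qinvertible_opE:
  assumes "qinvertible_op I S"
  obtains S' where "qbounded_op I S" and "qbounded_op I S'"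
    and "\<And>x. x \<in> lsq I \<Longrightarrow> S (S' x) = x" and "\<And>x. x \<in> lsq I \<Longrightarrow> S' (S x) = x"
  using assms unfolding qinvertible_op_def by blast

lemma qinvertible_op_bounded: "qinvertible_op I S \<Longrightarrow> qbounded_op I S"
  by (simp add: qinvertible_op_def)

lemma qinvertible_op_comp:
  assumes S: "qinvertible_op I S" and W: "qinvertible_op I W"
  shows "qinvertible_op I (\<lambda>x. S (W x))"
proof -
  obtain S' where S': "qbounded_op I S" "qbounded_op I S'"
    "\<And>x. x \<in> lsq I \<Longrightarrow> S (S' x) = x" "\<And>x. x \<in> lsq I \<Longrightarrow> S' (S x) = x"
    using qinvertible_opE[OF S] by blast
  obtain W' where W': "qbounded_op I W" "qbounded_op I W'"
    "\<And>x. x \<in> lsq I \<Longrightarrow> W (W' x) = x" "\<And>x. x \<in> lsq I \<Longrightarrow> W' (W x) = x"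
    using qinvertible_opE[OF W] by blast
  show ?thesis
    by (rule qinvertible_opI[OF qbounded_op_comp[OF S'(1) W'(1)] qbounded_op_comp[OF W'(2) S'(2)]])
      (use S' W' qbounded_op_lsq in simp_all)
qed

lemma qinvertible_op_cong:
  assumes S: "qinvertible_op I S" and eq: "\<And>x. x \<in> lsq I \<Longrightarrow> T x = S x"
  shows "qinvertible_op I T"
proof -
  obtain S' where S': "qbounded_op I S" "qbounded_op I S'"
    "\<And>x. x \<in> lsq I \<Longrightarrow> S (S' x) = x" "\<And>x. x \<in> lsq I \<Longrightarrow> S' (S x) = x"
    using qinvertible_opE[OF S] by blast
  show ?thesis
    by (rule qinvertible_opI[OF qbounded_op_cong[OF S'(1) eq] S'(2)])
      (use S' eq qbounded_op_lsq in simp_all)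
qed

lemma qinvertible_op_inverse:
  assumes "qbounded_op I S" and "qbounded_op I S'"
    and "\<And>x. x \<in> lsq I \<Longrightarrow> S (S' x) = x" and "\<And>x. x \<in> lsq I \<Longrightarrow> S' (S x) = x"
  shows "qinvertible_op I S'"
  using qinvertible_opI[OF assms(2,1,4,3)] .

lemma qinvertible_op_id: "qinvertible_op I (\<lambda>x. x)"
  by (rule qinvertible_opI[OF qbounded_op_id qbounded_op_id]) auto

lemma qinvertible_op_scaleR:
  assumes "r \<noteq> 0"
  shows "qinvertible_op I (\<lambda>x n. r *\<^sub>R x n)"
  by (rule qinvertible_opI[OF qbounded_op_scaleR[OF qbounded_op_id] qbounded_op_scaleR[OF qbounded_op_id],
        where a1 = "1 / r"])
    (use assms in auto)

lemma vnorm_le_near_identity: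
  assumes A: "qbounded_op I A" and near: "opnorm_le I (\<lambda>x n. A x n - x n) c" and x: "x \<in> lsq I"
  shows "(1 - c) * vnorm x \<le> vnorm (A x)"
proof -
  have Ax: "A x \<in> lsq I"
    by (rule qbounded_op_lsq[OF A x])
  have "vnorm x = vnorm (\<lambda>n. A x n - (A x n - x n))"
    by simp
  also have "\<dots> \<le> vnorm (A x) + vnorm (\<lambda>n. A x n - x n)"
    by (rule vnorm_diff_le[OF Ax lsq_diff[OF Ax x]])
  also have "\<dots> \<le> vnorm (A x) + c * vnorm x"
    using opnorm_leD[OF near x] by simp
  finally show ?thesis
    by (simp add: algebra_simps)
qed

lemma near_identity_inj:
  assumes A: "qbounded_op I A" and "c < 1" and near: "opnorm_le I (\<lambda>x n. A x n - x n) c"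
    and x: "x \<in> lsq I" and x': "x' \<in> lsq I" and eq: "A x = A x'"
  shows "x = x'"
proof -
  let ?z = "\<lambda>n. x n - x' n"
  have z: "?z \<in> lsq I"
    by (rule lsq_diff[OF x x'])
  have "A ?z = (\<lambda>n. 0)"
    using qbounded_op_apply_diff[OF A x x'] eq by simp
  then have "(1 - c) * vnorm ?z \<le> 0"
    using vnorm_le_near_identity[OF A near z] by (simp add: vnorm_zero)
  then have "vnorm ?z \<le> 0"
    using \<open>c < 1\<close> by (simp add: mult_le_0_iff)
  then have "?z = (\<lambda>n. 0)"
    by (rule vnorm_le_zero_imp_zero[OF z])
  then show ?thesis
    by (simp add: fun_eq_iff)
qed

lemma opnorm_le_near_identity:
  assumes A: "qbounded_op I A" and near: "opnorm_le I (\<lambda>x n. A x n - x n) c"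
  shows "opnorm_le I A (1 + c)"
  unfolding opnorm_le_def
proof
  fix x
  assume x: "x \<in> lsq I"
  have "vnorm (A x) = vnorm (\<lambda>n. x n + (A x n - x n))"
    by simp
  also have "\<dots> \<le> vnorm x + vnorm (\<lambda>n. A x n - x n)"
    by (rule vnorm_add_le[OF x lsq_diff[OF qbounded_op_lsq[OF A x] x]])
  also have "\<dots> \<le> (1 + c) * vnorm x"
    using opnorm_leD[OF near x] by (simp add: algebra_simps)
  finally show "vnorm (A x) \<le> (1 + c) * vnorm x" .
qed

lemma neumann_partial_sum_apply:
  assumes A: "qbounded_op I A" and p: "\<And>k. p k \<in> lsq I"
    and p_Suc: "\<And>k. p (Suc k) = (\<lambda>n. p k n - A (p k) n)"
  shows "A (\<lambda>n. \<Sum>k<K. p k n) = (\<lambda>n. p 0 n - p K n)"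
proof (induction K)
  case 0
  then show ?case
    by (simp add: qbounded_op_apply_zero[OF A])
next
  case (Suc K)
  have "A (\<lambda>n. \<Sum>k<Suc K. p k n) = (\<lambda>n. A (\<lambda>n. \<Sum>k<K. p k n) n + A (p K) n)"
    using qbounded_op_apply_add[OF A lsq_sum[OF p] p] by simp
  then show ?case
    by (simp add: Suc.IH p_Suc fun_eq_iff)
qed

lemma neumann_term_le:
  assumes A: "qbounded_op I A" and "0 \<le> c"
    and near: "opnorm_le I (\<lambda>x n. A x n - x n) c" and y: "y \<in> lsq I"
  shows "((\<lambda>v n. v n - A v n) ^^ k) y \<in> lsq I \<and>
    vnorm (((\<lambda>v n. v n - A v n) ^^ k) y) \<le> c ^ k * vnorm y"
proof (induction k)
  case 0
  then show ?case by (simp add: y)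
next
  case (Suc k)
  define p where "p = ((\<lambda>v n. v n - A v n) ^^ k) y"
  have p: "p \<in> lsq I"
    using Suc.IH by (simp add: p_def)
  have "vnorm (\<lambda>n. p n - A p n) = vnorm (\<lambda>n. A p n - p n)"
    using vnorm_minus[of "\<lambda>n. A p n - p n"] by simp
  also have "\<dots> \<le> c * (c ^ k * vnorm y)"
    using opnorm_leD[OF near p] Suc.IH \<open>0 \<le> c\<close> unfolding p_def[symmetric]
    by (meson mult_left_mono order_trans)
  finally show ?case
    using lsq_diff[OF p qbounded_op_lsq[OF A p]] by (simp add: p_def[symmetric] mult_ac)
qed

lemma near_identity_surj:
  assumes A: "qbounded_op I A" and c: "0 \<le> c" "c < 1"
    and near: "opnorm_le I (\<lambda>x n. A x n - x n) c" and y: "y \<in> lsq I"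
  shows "\<exists>x\<in>lsq I. A x = y"
proof -
  \<comment> \<open>the Neumann series x = sum of (I - A)^k y\<close>
  define p where "p k = ((\<lambda>v n. v n - A v n) ^^ k) y" for k
  have p_Suc: "p (Suc k) = (\<lambda>n. p k n - A (p k) n)" for k
    by (simp add: p_def)
  have p: "p k \<in> lsq I \<and> vnorm (p k) \<le> c ^ k * vnorm y" for k
    unfolding p_def by (rule neumann_term_le[OF A c(1) near y])
  then have p_lsq: "p k \<in> lsq I" for k
    by blast
  have p_summable: "summable (\<lambda>k. vnorm (p k))"
  proof (rule summable_comparison_test'[where N = 0])
    show "summable (\<lambda>k. c ^ k * vnorm y)"
      using c by (intro summable_mult2 summable_geometric) simp
    show "norm (vnorm (p k)) \<le> c ^ k * vnorm y" for k
      using p[of k] vnorm_nonneg[OF p_lsq] by simp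
  qed
  define x where "x = (\<lambda>n. \<Sum>k. p k n)"
  define S where "S K = (\<lambda>n. \<Sum>k<K. p k n)" for K
  define t where "t K = (\<Sum>j. vnorm (p (j + K)))" for K
  have x: "x \<in> lsq I"
    unfolding x_def using lsq_suminf[OF p_lsq p_summable] by blast
  have S: "S K \<in> lsq I" for K
    unfolding S_def by (rule lsq_sum[OF p_lsq])
  have residual: "vnorm (\<lambda>n. A x n - y n) \<le> (1 + c) * t K + c ^ K * vnorm y" for K
  proof -
    have d: "(\<lambda>n. x n - S K n) \<in> lsq I"
      by (rule lsq_diff[OF x S])
    have "A (S K) = (\<lambda>n. y n - p K n)"
      using neumann_partial_sum_apply[of I A p K, OF A p_lsq p_Suc] by (simp add: S_def p_def)
    then have "(\<lambda>n. A x n - y n) = (\<lambda>n. A (\<lambda>n. x n - S K n) n - p K n)"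
      by (simp add: qbounded_op_apply_diff[OF A x S])
    then have "vnorm (\<lambda>n. A x n - y n) \<le> vnorm (A (\<lambda>n. x n - S K n)) + vnorm (p K)"
      using vnorm_diff_le[OF qbounded_op_lsq[OF A d] p_lsq] by simp
    also have "\<dots> \<le> (1 + c) * vnorm (\<lambda>n. x n - S K n) + c ^ K * vnorm y"
      using opnorm_leD[OF opnorm_le_near_identity[OF A near] d] p[of K] by simp
    also have "\<dots> \<le> (1 + c) * t K + c ^ K * vnorm y"
      using vnorm_suminf_remainder_le[OF p_lsq p_summable, of K] c
      by (simp add: x_def S_def t_def)
    finally show ?thesis .
  qed
  have "(\<lambda>K. (1 + c) * t K + c ^ K * vnorm y) \<longlonglongrightarrow> (1 + c) * 0 + 0 * vnorm y"
    unfolding t_def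
    by (intro tendsto_intros suminf_shift_tendsto_zero[OF p_summable] LIMSEQ_power_zero) (use c in simp)
  then have "vnorm (\<lambda>n. A x n - y n) \<le> 0"
    using residual by (intro LIMSEQ_le_const) auto
  then have "(\<lambda>n. A x n - y n) = (\<lambda>n. 0)"
    by (rule vnorm_le_zero_imp_zero[OF lsq_diff[OF qbounded_op_lsq[OF A x] y]])
  then show ?thesis
    using x by (intro bexI[of _ x]) (simp_all add: fun_eq_iff)
qed

lemma qinvertible_op_near_identity:
  assumes A: "qbounded_op I A" and c: "0 \<le> c" "c < 1"
    and near: "opnorm_le I (\<lambda>x n. A x n - x n) c"
  shows "qinvertible_op I A"
proof -
  define B where "B y = (SOME x. x \<in> lsq I \<and> A x = y)" for y
  have B: "B y \<in> lsq I" and AB: "A (B y) = y" if "y \<in> lsq I" for y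
    using someI_ex[OF near_identity_surj[OF A c near that, unfolded Bex_def]]
    unfolding B_def by blast+
  have inj: "x = x'" if "x \<in> lsq I" "x' \<in> lsq I" "A x = A x'" for x x'
    by (rule near_identity_inj[OF A c(2) near that])
  have BA: "B (A x) = x" if "x \<in> lsq I" for x
    using inj[OF B that AB] qbounded_op_lsq[OF A that] by blast
  have "qbounded_op I B"
  proof (rule qbounded_opI)
    show "x \<in> lsq I \<Longrightarrow> B x \<in> lsq I" for x
      by (rule B)
    show "B (\<lambda>n. qmult (x n) q + y n) = (\<lambda>n. qmult (B x n) q + B y n)"
      if "x \<in> lsq I" "y \<in> lsq I" for x y q
    proof (rule inj)
      show "A (B (\<lambda>n. qmult (x n) q + y n)) = A (\<lambda>n. qmult (B x n) q + B y n)"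
        using that by (simp add: AB lsq_qmult_add qbounded_op_linear[OF A B B])
    qed (use that in \<open>simp_all add: B lsq_qmult_add\<close>)
    show "opnorm_le I B (1 / (1 - c))"
      unfolding opnorm_le_def
    proof
      fix y
      assume "y \<in> lsq I"
      then have "(1 - c) * vnorm (B y) \<le> vnorm y"
        using vnorm_le_near_identity[OF A near B] AB by metis
      then show "vnorm (B y) \<le> 1 / (1 - c) * vnorm y"
        using c by (simp add: field_simps)
    qed
  qed
  then show ?thesis
    using qinvertible_opI[OF A _ AB BA] by blast
qed

lemma qinvertible_op_perturb:
  assumes S: "qinvertible_op I S"
  obtains d where "0 < d"
    and "\<And>E. qbounded_op I E \<Longrightarrow> opnorm_le I E d \<Longrightarrow> qinvertible_op I (\<lambda>x n. S x n + E x n)"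
proof -
  obtain S' where S': "qbounded_op I S" "qbounded_op I S'"
    "\<And>x. x \<in> lsq I \<Longrightarrow> S (S' x) = x" "\<And>x. x \<in> lsq I \<Longrightarrow> S' (S x) = x"
    using qinvertible_opE[OF S] by blast
  obtain M where M: "opnorm_le I S' M" "0 < M"
    using qbounded_op_opnorm_le[OF S'(2)] .
  have "qinvertible_op I (\<lambda>x n. S x n + E x n)"
    if E: "qbounded_op I E" "opnorm_le I E (1 / (2 * M))" for E
  proof -
    \<comment> \<open>S + E = S (I + S' E), and I + S' E is within 1/2 of the identity\<close>
    define F where "F = (\<lambda>x n. x n + S' (E x) n)"
    have "qinvertible_op I F"
    proof (rule qinvertible_op_near_identity)
      show "qbounded_op I F"
        unfolding F_def by (rule qbounded_op_add[OF qbounded_op_id qbounded_op_comp[OF S'(2) E(1)]])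
      have "opnorm_le I (\<lambda>x. S' (E x)) (M * (1 / (2 * M)))"
        using M E qbounded_op_lsq[OF E(1)] by (intro opnorm_le_comp) simp_all
      then show "opnorm_le I (\<lambda>x n. F x n - x n) (1 / 2)"
        using M(2) by (simp add: F_def)
    qed simp_all
    then have "qinvertible_op I (\<lambda>x. S (F x))"
      by (rule qinvertible_op_comp[OF S])
    moreover have "(\<lambda>n. S x n + E x n) = S (F x)" if x: "x \<in> lsq I" for x
      using qbounded_op_apply_add[OF S'(1) x qbounded_op_lsq[OF S'(2) qbounded_op_lsq[OF E(1) x]]]
        S'(3)[OF qbounded_op_lsq[OF E(1) x]]
      by (simp add: F_def)
    ultimately show ?thesis
      by (rule qinvertible_op_cong)
  qed
  moreover have "0 < 1 / (2 * M)"
    using M by simp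
  ultimately show thesis
    using that by blast
qed

section \<open>The sets \<Phi> and \<Phi>^0\<close>

lemma fredholm0_piI:
  "qinvertible_op I S \<Longrightarrow> qcompact_op I K \<Longrightarrow> (\<And>x. x \<in> lsq I \<Longrightarrow> A x = (\<lambda>n. S x n + K x n)) \<Longrightarrow>
    fredholm0_pi I A"
  unfolding fredholm0_pi_def by blast

lemma fredholm0_piE:
  assumes "fredholm0_pi I A"
  obtains S K where "qinvertible_op I S" and "qcompact_op I K"
    and "\<And>x. x \<in> lsq I \<Longrightarrow> A x = (\<lambda>n. S x n + K x n)"
  using assms unfolding fredholm0_pi_def by blast

lemma qinvertible_op_imp_fredholm0_pi: "qinvertible_op I A \<Longrightarrow> fredholm0_pi I A"
  by (rule fredholm0_piI[OF _ qcompact_op_zero]) auto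

lemma fredholm0_pi_bounded:
  assumes "fredholm0_pi I A"
  shows "qbounded_op I A"
proof -
  obtain S K where "qinvertible_op I S" "qcompact_op I K" "\<And>x. x \<in> lsq I \<Longrightarrow> A x = (\<lambda>n. S x n + K x n)"
    using fredholm0_piE[OF assms] by blast
  then show ?thesis
    by (blast intro: qbounded_op_cong qbounded_op_add qinvertible_op_bounded qcompact_op_bounded)
qed

lemma fredholm0_pi_imp_fredholm_pi:
  assumes A: "fredholm0_pi I A"
  shows "fredholm_pi I A"
proof -
  obtain S K where S: "qinvertible_op I S" and K: "qcompact_op I K"
    and A_eq: "\<And>x. x \<in> lsq I \<Longrightarrow> A x = (\<lambda>n. S x n + K x n)"
    using fredholm0_piE[OF A] by blast
  obtain S' where S': "qbounded_op I S" "qbounded_op I S'"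
    "\<And>x. x \<in> lsq I \<Longrightarrow> S (S' x) = x" "\<And>x. x \<in> lsq I \<Longrightarrow> S' (S x) = x"
    using qinvertible_opE[OF S] by blast
  \<comment> \<open>the inverse of S is a parametrix of A = S + K\<close>
  have "qcompact_op I (\<lambda>x n. A (S' x) n - x n)"
  proof (rule qcompact_op_cong[OF qcompact_op_comp_right[OF K S'(2)]])
    fix x
    assume "x \<in> lsq I"
    then show "(\<lambda>n. A (S' x) n - x n) = K (S' x)"
      using A_eq[OF qbounded_op_lsq[OF S'(2)]] S'(3) by simp
  qed
  moreover have "qcompact_op I (\<lambda>x n. S' (A x) n - x n)"
  proof (rule qcompact_op_cong[OF qcompact_op_comp_left[OF S'(2) K]])
    fix x
    assume x: "x \<in> lsq I"
    show "(\<lambda>n. S' (A x) n - x n) = S' (K x)"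
      using A_eq[OF x] S'(4)[OF x] qbounded_op_apply_add[OF S'(2) qbounded_op_lsq[OF S'(1) x]
          qbounded_op_lsq[OF qcompact_op_bounded[OF K] x]]
      by simp
  qed
  ultimately show ?thesis
    unfolding fredholm_pi_def using fredholm0_pi_bounded[OF A] S'(2) by blast
qed

lemma fredholm0_pi_right_factor:
  assumes A: "fredholm0_pi I A" and B: "qbounded_op I B" and AB: "fredholm0_pi I (\<lambda>x. A (B x))"
  shows "fredholm0_pi I B"
proof -
  obtain S K where S: "qinvertible_op I S" and K: "qcompact_op I K"
    and A_eq: "\<And>x. x \<in> lsq I \<Longrightarrow> A x = (\<lambda>n. S x n + K x n)"
    using fredholm0_piE[OF A] by blast
  obtain S' where S': "qbounded_op I S" "qbounded_op I S'"
    "\<And>x. x \<in> lsq I \<Longrightarrow> S (S' x) = x" "\<And>x. x \<in> lsq I \<Longrightarrow> S' (S x) = x"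
    using qinvertible_opE[OF S] by blast
  obtain S2 K2 where S2: "qinvertible_op I S2" and K2: "qcompact_op I K2"
    and AB_eq: "\<And>x. x \<in> lsq I \<Longrightarrow> A (B x) = (\<lambda>n. S2 x n + K2 x n)"
    using fredholm0_piE[OF AB] by blast
  have K_bounded: "qbounded_op I K" and K2_bounded: "qbounded_op I K2"
    using K K2 by (simp_all add: qcompact_op_bounded)
  \<comment> \<open>apply S' to A B = S2 + K2 and to A = S + K: B = S' S2 + (S' K2 - S' K B)\<close>
  show ?thesis
  proof (rule fredholm0_piI[OF qinvertible_op_comp[OF qinvertible_op_inverse[OF S'] S2]
        qcompact_op_diff[OF qcompact_op_comp_left[OF S'(2) K2]
          qcompact_op_comp_left[OF S'(2) qcompact_op_comp_right[OF K B]]]])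
    fix x
    assume x: "x \<in> lsq I"
    have Bx: "B x \<in> lsq I"
      by (rule qbounded_op_lsq[OF B x])
    have "S' (A (B x)) = (\<lambda>n. B x n + S' (K (B x)) n)"
      using A_eq[OF Bx] S'(4)[OF Bx]
        qbounded_op_apply_add[OF S'(2) qbounded_op_lsq[OF S'(1) Bx] qbounded_op_lsq[OF K_bounded Bx]]
      by simp
    moreover have "S' (A (B x)) = (\<lambda>n. S' (S2 x) n + S' (K2 x) n)"
      using AB_eq[OF x] qbounded_op_apply_add[OF S'(2) qbounded_op_lsq[OF qinvertible_op_bounded[OF S2] x]
          qbounded_op_lsq[OF K2_bounded x]]
      by simp
    ultimately show "B x = (\<lambda>n. S' (S2 x) n + (S' (K2 x) n - S' (K (B x)) n))"
      by (simp add: fun_eq_iff algebra_simps)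
  qed
qed

lemma fredholm0_pi_left_parametrix:
  assumes B: "fredholm0_pi I B" and A: "qbounded_op I A" and AB: "qcompact_op I (\<lambda>x n. A (B x) n - x n)"
  shows "fredholm0_pi I A"
proof -
  obtain S K where S: "qinvertible_op I S" and K: "qcompact_op I K"
    and B_eq: "\<And>x. x \<in> lsq I \<Longrightarrow> B x = (\<lambda>n. S x n + K x n)"
    using fredholm0_piE[OF B] by blast
  obtain S' where S': "qbounded_op I S" "qbounded_op I S'"
    "\<And>x. x \<in> lsq I \<Longrightarrow> S (S' x) = x" "\<And>x. x \<in> lsq I \<Longrightarrow> S' (S x) = x"
    using qinvertible_opE[OF S] by blast
  \<comment> \<open>A = S' + ((A B - I) S' - A K S')\<close>
  show ?thesis
  proof (rule fredholm0_piI[OF qinvertible_op_inverse[OF S']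
        qcompact_op_diff[OF qcompact_op_comp_right[OF AB S'(2)]
          qcompact_op_comp_left[OF A qcompact_op_comp_right[OF K S'(2)]]]])
    fix z
    assume z: "z \<in> lsq I"
    have S'z: "S' z \<in> lsq I"
      by (rule qbounded_op_lsq[OF S'(2) z])
    have "B (S' z) = (\<lambda>n. z n + K (S' z) n)"
      using B_eq[OF S'z] S'(3)[OF z] by simp
    then have "A (B (S' z)) = (\<lambda>n. A z n + A (K (S' z)) n)"
      using qbounded_op_apply_add[OF A z qbounded_op_lsq[OF qcompact_op_bounded[OF K] S'z]] by simp
    then show "A z = (\<lambda>n. S' z n + (A (B (S' z)) n - S' z n - A (K (S' z)) n))"
      by (simp add: fun_eq_iff)
  qed
qed

lemma fredholm0_pi_perturb:
  assumes A: "fredholm0_pi I A"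
  obtains d where "0 < d"
    and "\<And>A'. qbounded_op I A' \<Longrightarrow> opnorm_le I (\<lambda>x n. A' x n - A x n) d \<Longrightarrow> fredholm0_pi I A'"
proof -
  obtain S K where S: "qinvertible_op I S" and K: "qcompact_op I K"
    and A_eq: "\<And>x. x \<in> lsq I \<Longrightarrow> A x = (\<lambda>n. S x n + K x n)"
    using fredholm0_piE[OF A] by blast
  obtain d where d: "0 < d"
    "\<And>E. qbounded_op I E \<Longrightarrow> opnorm_le I E d \<Longrightarrow> qinvertible_op I (\<lambda>x n. S x n + E x n)"
    using qinvertible_op_perturb[OF S] by blast
  have "fredholm0_pi I A'"
    if A': "qbounded_op I A'" "opnorm_le I (\<lambda>x n. A' x n - A x n) d" for A'
  proof (rule fredholm0_piI[OF d(2)[OF qbounded_op_diff[OF A'(1) fredholm0_pi_bounded[OF A]] A'(2)] K])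
    show "x \<in> lsq I \<Longrightarrow> A' x = (\<lambda>n. S x n + (A' x n - A x n) + K x n)" for x
      using A_eq by (simp add: fun_eq_iff)
  qed
  with d(1) show thesis
    using that by blast
qed

lemma fredholm_pi_near_fredholm0_pi:
  assumes A: "fredholm_pi I A"
  obtains d where "0 < d"
    and "\<And>A'. fredholm0_pi I A' \<Longrightarrow> opnorm_le I (\<lambda>x n. A' x n - A x n) d \<Longrightarrow> fredholm0_pi I A"
proof -
  obtain B where A_bounded: "qbounded_op I A" and B: "qbounded_op I B"
    and AB: "qcompact_op I (\<lambda>x n. A (B x) n - x n)"
    using A unfolding fredholm_pi_def by blast
  obtain CB where CB: "opnorm_le I B CB" "0 < CB"
    using qbounded_op_opnorm_le[OF B] .
  obtain d0 where d0: "0 < d0"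
    "\<And>E. qbounded_op I E \<Longrightarrow> opnorm_le I E d0 \<Longrightarrow> qinvertible_op I (\<lambda>x n. x n + E x n)"
    using qinvertible_op_perturb[OF qinvertible_op_id] by blast
  have "fredholm0_pi I A"
    if A': "fredholm0_pi I A'" "opnorm_le I (\<lambda>x n. A' x n - A x n) (d0 / CB)" for A'
  proof -
    \<comment> \<open>A' B = I + (A' - A) B + (A B - I), a small perturbation of I plus a compact operator\<close>
    define E where "E = (\<lambda>x n. A' (B x) n - A (B x) n)"
    have E: "qbounded_op I E"
      unfolding E_def by (rule qbounded_op_comp[OF qbounded_op_diff[OF fredholm0_pi_bounded[OF A'(1)] A_bounded] B])
    have "opnorm_le I E (d0 / CB * CB)"
      unfolding E_def using A'(2) CB d0(1) qbounded_op_lsq[OF B] by (intro opnorm_le_comp) simp_all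
    then have "opnorm_le I E d0"
      using CB(2) by simp
    then have "fredholm0_pi I (\<lambda>x. A' (B x))"
      by (rule fredholm0_piI[OF d0(2)[OF E] AB]) (simp add: E_def fun_eq_iff)
    then have "fredholm0_pi I B"
      by (rule fredholm0_pi_right_factor[OF A'(1) B])
    then show ?thesis
      by (rule fredholm0_pi_left_parametrix[OF _ A_bounded AB])
  qed
  moreover have "0 < d0 / CB"
    using d0 CB by simp
  ultimately show thesis
    using that by blast
qed

definition opnorm_continuous :: "nat set \<Rightarrow> ('a::metric_space \<Rightarrow> qop) \<Rightarrow> bool" where
  "opnorm_continuous I F \<longleftrightarrow>
    (\<forall>p e. 0 < e \<longrightarrow> (\<exists>d>0. \<forall>p'. dist p' p < d \<longrightarrow> opnorm_le I (\<lambda>x n. F p' x n - F p x n) e))"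

lemma opnorm_continuousD:
  assumes "opnorm_continuous I F" and "0 < e"
  obtains d where "0 < d" and "\<And>p'. dist p' p < d \<Longrightarrow> opnorm_le I (\<lambda>x n. F p' x n - F p x n) e"
  using assms unfolding opnorm_continuous_def by blast

lemma open_fredholm0_pi_preimage:
  assumes bounded: "\<And>p. qbounded_op I (F p)" and cont: "opnorm_continuous I F"
  shows "open {p. fredholm0_pi I (F p)}"
  unfolding open_dist
proof (intro ballI)
  fix p
  assume "p \<in> {p. fredholm0_pi I (F p)}"
  then obtain d where d: "0 < d"
    "\<And>A'. qbounded_op I A' \<Longrightarrow> opnorm_le I (\<lambda>x n. A' x n - F p x n) d \<Longrightarrow> fredholm0_pi I A'"
    using fredholm0_pi_perturb by blast
  obtain e where "0 < e" "\<And>p'. dist p' p < e \<Longrightarrow> opnorm_le I (\<lambda>x n. F p' x n - F p x n) d"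
    using opnorm_continuousD[OF cont d(1)] by blast
  then show "\<exists>e>0. \<forall>p'. dist p' p < e \<longrightarrow> p' \<in> {p. fredholm0_pi I (F p)}"
    using d(2) bounded by blast
qed

lemma closedin_fredholm0_pi_preimage:
  assumes cont: "opnorm_continuous I F"
  shows "closedin (top_of_set {p. fredholm_pi I (F p)}) {p. fredholm0_pi I (F p)}"
  unfolding closedin_limpt
proof (intro conjI allI impI)
  show "{p. fredholm0_pi I (F p)} \<subseteq> {p. fredholm_pi I (F p)}"
    using fredholm0_pi_imp_fredholm_pi by blast
  fix p
  assume p: "p islimpt {p. fredholm0_pi I (F p)} \<and> p \<in> {p. fredholm_pi I (F p)}"
  then obtain d where d: "0 < d"
    "\<And>A'. fredholm0_pi I A' \<Longrightarrow> opnorm_le I (\<lambda>x n. A' x n - F p x n) d \<Longrightarrow> fredholm0_pi I (F p)"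
    using fredholm_pi_near_fredholm0_pi by blast
  obtain e where e: "0 < e" "\<And>p'. dist p' p < e \<Longrightarrow> opnorm_le I (\<lambda>x n. F p' x n - F p x n) d"
    using opnorm_continuousD[OF cont d(1)] by blast
  obtain p' where "fredholm0_pi I (F p')" "dist p' p < e"
    using p e(1) unfolding islimpt_approachable by blast
  then show "p \<in> {p. fredholm0_pi I (F p)}"
    using d(2) e(2) by blast
qed

section \<open>The operators R_q(T)\<close>

lemma Rq_bounded:
  assumes T: "qbounded_op I T"
  shows "qbounded_op I (Rq q T)"
  unfolding Rq_def
  by (rule qbounded_op_add[OF qbounded_op_diff[OF qbounded_op_comp[OF T T] qbounded_op_scaleR[OF T]]
        qbounded_op_scaleR[OF qbounded_op_id]])

lemma Rq_diff_opnorm_le: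
  assumes T: "qbounded_op I T" and C: "opnorm_le I T C"
  shows "opnorm_le I (\<lambda>x n. Rq p T x n - Rq q T x n)
    (2 * \<bar>qRe p - qRe q\<bar> * C + \<bar>(norm p)\<^sup>2 - (norm q)\<^sup>2\<bar>)"
  unfolding opnorm_le_def
proof
  fix x
  assume x: "x \<in> lsq I"
  have "(\<lambda>n. Rq p T x n - Rq q T x n)
      = (\<lambda>n. (2 * (qRe q - qRe p)) *\<^sub>R T x n + ((norm p)\<^sup>2 - (norm q)\<^sup>2) *\<^sub>R x n)"
    by (simp add: Rq_def fun_eq_iff algebra_simps)
  then have "vnorm (\<lambda>n. Rq p T x n - Rq q T x n)
      \<le> \<bar>2 * (qRe q - qRe p)\<bar> * vnorm (T x) + \<bar>(norm p)\<^sup>2 - (norm q)\<^sup>2\<bar> * vnorm x"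
    using lsq_lincomb[OF qbounded_op_lsq[OF T x] x] by simp
  also have "\<dots> \<le> \<bar>2 * (qRe q - qRe p)\<bar> * (C * vnorm x) + \<bar>(norm p)\<^sup>2 - (norm q)\<^sup>2\<bar> * vnorm x"
    using opnorm_leD[OF C x] by (intro add_mono mult_left_mono) auto
  also have "\<dots> = (2 * \<bar>qRe p - qRe q\<bar> * C + \<bar>(norm p)\<^sup>2 - (norm q)\<^sup>2\<bar>) * vnorm x"
    unfolding abs_mult abs_minus_commute[of "qRe q"] by (simp add: algebra_simps)
  finally show "vnorm (\<lambda>n. Rq p T x n - Rq q T x n)
      \<le> (2 * \<bar>qRe p - qRe q\<bar> * C + \<bar>(norm p)\<^sup>2 - (norm q)\<^sup>2\<bar>) * vnorm x" .
qed

lemma Rq_opnorm_continuous: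
  assumes T: "qbounded_op I T"
  shows "opnorm_continuous I (\<lambda>q. Rq q T)"
  unfolding opnorm_continuous_def
proof (intro allI impI)
  fix q :: quat and e :: real
  assume "0 < e"
  obtain C where C: "opnorm_le I T C" "0 < C"
    using qbounded_op_opnorm_le[OF T] .
  define g where "g p = 2 * \<bar>qRe p - qRe q\<bar> * C + \<bar>(norm p)\<^sup>2 - (norm q)\<^sup>2\<bar>" for p
  have "continuous (at q) g"
    unfolding g_def qRe_def by (intro continuous_intros continuous_Re)
  then obtain d where "0 < d" and d: "\<And>p. dist p q < d \<Longrightarrow> dist (g p) (g q) < e"
    using \<open>0 < e\<close> unfolding continuous_at_eps_delta by blast
  have "opnorm_le I (\<lambda>x n. Rq p T x n - Rq q T x n) e" if "dist p q < d" for p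
  proof (rule opnorm_le_mono[OF Rq_diff_opnorm_le[OF T C(1)]])
    show "2 * \<bar>qRe p - qRe q\<bar> * C + \<bar>(norm p)\<^sup>2 - (norm q)\<^sup>2\<bar> \<le> e"
      using d[OF that] by (simp add: g_def dist_real_def)
  qed
  with \<open>0 < d\<close> show "\<exists>d>0. \<forall>p. dist p q < d \<longrightarrow> opnorm_le I (\<lambda>x n. Rq p T x n - Rq q T x n) e"
    by blast
qed

lemma opnorm_le_scaled_Rq_minus_id:
  assumes T: "qbounded_op I T" and C: "opnorm_le I T C" "0 \<le> C" and "0 < r"
  shows "opnorm_le I (\<lambda>x n. (1 / r\<^sup>2) *\<^sub>R Rq (complex_of_real r, 0) T x n - x n)
    ((C\<^sup>2 + 2 * r * C) / r\<^sup>2)"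
  unfolding opnorm_le_def
proof
  fix x
  assume x: "x \<in> lsq I"
  have TT: "opnorm_le I (\<lambda>x. T (T x)) (C * C)"
    using C qbounded_op_lsq[OF T] by (intro opnorm_le_comp) simp_all
  have "(\<lambda>n. (1 / r\<^sup>2) *\<^sub>R Rq (complex_of_real r, 0) T x n - x n)
      = (\<lambda>n. (1 / r\<^sup>2) *\<^sub>R T (T x) n + (- 2 / r) *\<^sub>R T x n)"
    using \<open>0 < r\<close> by (simp add: Rq_def qRe_def norm_Pair fun_eq_iff power2_eq_square algebra_simps)
  then have "vnorm (\<lambda>n. (1 / r\<^sup>2) *\<^sub>R Rq (complex_of_real r, 0) T x n - x n)
      \<le> \<bar>1 / r\<^sup>2\<bar> * vnorm (T (T x)) + \<bar>- 2 / r\<bar> * vnorm (T x)"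
    using lsq_lincomb[OF qbounded_op_lsq[OF T qbounded_op_lsq[OF T x]] qbounded_op_lsq[OF T x]]
    by (simp only:)
  also have "\<dots> = 1 / r\<^sup>2 * vnorm (T (T x)) + 2 / r * vnorm (T x)"
    using \<open>0 < r\<close> by simp
  also have "\<dots> \<le> 1 / r\<^sup>2 * (C * C * vnorm x) + 2 / r * (C * vnorm x)"
    using opnorm_leD[OF TT x] opnorm_leD[OF C(1) x] \<open>0 < r\<close>
    by (intro add_mono mult_left_mono) simp_all
  also have "\<dots> = (C\<^sup>2 + 2 * r * C) / r\<^sup>2 * vnorm x"
    using \<open>0 < r\<close> by (simp add: power2_eq_square field_simps)
  finally show "vnorm (\<lambda>n. (1 / r\<^sup>2) *\<^sub>R Rq (complex_of_real r, 0) T x n - x n)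
      \<le> (C\<^sup>2 + 2 * r * C) / r\<^sup>2 * vnorm x" .
qed

lemma Rq_qinvertible_op_ex:
  assumes T: "qbounded_op I T"
  shows "\<exists>q. qinvertible_op I (Rq q T)"
proof -
  obtain C where C: "opnorm_le I T C" "0 < C"
    using qbounded_op_opnorm_le[OF T] .
  define r where "r = 3 * C + 1"
  have "0 < r"
    using C by (simp add: r_def)
  have "r\<^sup>2 = (C\<^sup>2 + 2 * r * C) + (2 * C\<^sup>2 + 4 * C + 1)"
    by (simp add: r_def power2_eq_square algebra_simps)
  then have "C\<^sup>2 + 2 * r * C < r\<^sup>2"
    using C(2) zero_le_power2[of C] by linarith
  then have c: "0 \<le> (C\<^sup>2 + 2 * r * C) / r\<^sup>2" "(C\<^sup>2 + 2 * r * C) / r\<^sup>2 < 1"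
    using C(2) \<open>0 < r\<close> by simp_all
  define A where "A = (\<lambda>x n. (1 / r\<^sup>2) *\<^sub>R Rq (complex_of_real r, 0) T x n)"
  have "qinvertible_op I A"
    unfolding A_def
    by (rule qinvertible_op_near_identity[OF qbounded_op_scaleR[OF Rq_bounded[OF T]] c
          opnorm_le_scaled_Rq_minus_id[OF T C(1) less_imp_le[OF C(2)] \<open>0 < r\<close>]])
  then have "qinvertible_op I (\<lambda>x. (\<lambda>x n. r\<^sup>2 *\<^sub>R x n) (A x))"
    using \<open>0 < r\<close> by (intro qinvertible_op_comp[OF qinvertible_op_scaleR]) simp_all
  then have "qinvertible_op I (Rq (complex_of_real r, 0) T)"
    by (rule qinvertible_op_cong) (use \<open>0 < r\<close> in \<open>simp add: A_def fun_eq_iff\<close>)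
  then show ?thesis ..
qed

theorem mainTheorem11:
  fixes I :: "nat set" and T :: qop
  assumes "qbounded_op I T"
    and "connected {q :: quat. fredholm_pi I (Rq q T)}"
  shows "S_ess_spec I T = S_ess_spec0 I T"
proof -
  let ?U = "{q :: quat. fredholm_pi I (Rq q T)}" and ?P = "{q :: quat. fredholm0_pi I (Rq q T)}"
  have cont: "opnorm_continuous I (\<lambda>q. Rq q T)"
    by (rule Rq_opnorm_continuous[OF assms(1)])
  have "openin (top_of_set ?U) ?P"
    using open_fredholm0_pi_preimage[OF Rq_bounded[OF assms(1)] cont] fredholm0_pi_imp_fredholm_pi
    by (intro open_subset) auto
  moreover have "closedin (top_of_set ?U) ?P"
    by (rule closedin_fredholm0_pi_preimage[OF cont])
  moreover have "?P \<noteq> {}"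
    using Rq_qinvertible_op_ex[OF assms(1)] qinvertible_op_imp_fredholm0_pi by blast
  ultimately have "?P = ?U"
    using assms(2) unfolding connected_clopen by blast
  then show ?thesis
    unfolding S_ess_spec_def S_ess_spec0_def by blast
qed

end
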